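(* Let $N\ge1$, let $G$ be a group, and let $\mathbf r:G\to \mathrm U(N)$ be a unitary representation of $G$ acting on the $N$ Higgs doublets $\Phi_1,\dots,\Phi_N$ by $\Phi_i\mapsto \mathbf r(g)_{ij}\Phi_j$. Consider the general $N$-Higgs-doublet potential $V_H=\mu_{ij}(\Phi_i^\dagger\Phi_j)+z_{ij,kl}(\Phi_i^\dagger\Phi_j)(\Phi_k^\dagger\Phi_l)$ with coefficients satisfying $\mu_{ij}=\overline{\mu_{ji}}$ and $z_{ij,kl}=z_{kl,ij}=\overline{z_{ji,lk}}$. Then the number of independent (real) parameters of those potentials $V_H$ that are invariant under the action of $G$ (i.e. the real dimension of the subspace of coefficient pairs $(\mu,z)$ fixed by the induced action of $G$) equals the multiplicity of the trivial representation $\mathbf 1$ (the number of singlets) in the representation $$(\bar{\mathbf r}\otimes\mathbf r)\ \oplus\ \big[\mathrm{Sym}^2(\mathbf r)\otimes\mathrm{Sym}^2(\bar{\mathbf r})\big]\ \oplus\ \big[\mathrm{Alt}^2(\mathbf r)\otimes\mathrm{Alt}^2(\bar{\mathbf r})\big],$$ where the first summand is the contribution of $\mu_{ij}$ and the remaining two are the contribution of $z_{ij,kl}$.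
   Context: $\bar{\mathbf r}$ denotes the complex conjugate representation of $\mathbf r$; $\mathrm{Sym}^2(\mathbf r)$ and $\mathrm{Alt}^2(\mathbf r)$ denote the symmetric and antisymmetric parts of $\mathbf r\otimes\mathbf r$, so that $\mathbf r\otimes\mathbf r=\mathrm{Sym}^2(\mathbf r)\oplus\mathrm{Alt}^2(\mathbf r)$. All representations involved are unitary and hence decompose as direct sums of irreducible representations; the multiplicity of the trivial one-dimensional representation $\mathbf 1$ is the number of singlets. *)

theory Defs
  imports "HOL-Analysis.Analysis" "HOL-Algebra.Group"
begin

(* Matrices acting on C^I, I a finite index type.  A representation of the group G
   on a subspace W of C^I is a map rho : G -> complex^'i^'i leaving W invariant. *)

definition unitary_mat :: "complex^'n^'n \<Rightarrow> bool" where
  "unitary_mat U \<longleftrightarrow> (\<chi> i j. cnj (U $ j $ i)) ** U = mat 1"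

definition conj_rep :: "('g \<Rightarrow> complex^'n^'n) \<Rightarrow> 'g \<Rightarrow> complex^'n^'n" where
  "conj_rep r g = (\<chi> i j. cnj (r g $ i $ j))"

definition tensor_rep :: "('g \<Rightarrow> complex^'i^'i) \<Rightarrow> ('g \<Rightarrow> complex^'j^'j) \<Rightarrow>
    'g \<Rightarrow> complex^('i \<times> 'j)^('i \<times> 'j)" where
  "tensor_rep r1 r2 g = (\<chi> p q. r1 g $ fst p $ fst q * r2 g $ snd p $ snd q)"

definition tensor_space :: "(complex^'i) set \<Rightarrow> (complex^'j) set \<Rightarrow> (complex^('i \<times> 'j)) set" where
  "tensor_space W1 W2 = vec.span {(\<chi> p. v $ fst p * w $ snd p) | v w. v \<in> W1 \<and> w \<in> W2}"

definition dsum_rep :: "('g \<Rightarrow> complex^'i^'i) \<Rightarrow> ('g \<Rightarrow> complex^'j^'j) \<Rightarrow>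
    'g \<Rightarrow> complex^('i + 'j)^('i + 'j)" where
  "dsum_rep r1 r2 g = (\<chi> a b. case (a, b) of
      (Inl i, Inl j) \<Rightarrow> r1 g $ i $ j
    | (Inr i, Inr j) \<Rightarrow> r2 g $ i $ j
    | _ \<Rightarrow> 0)"

definition dsum_space :: "(complex^'i) set \<Rightarrow> (complex^'j) set \<Rightarrow> (complex^('i + 'j)) set" where
  "dsum_space W1 W2 = {v. (\<chi> i. v $ Inl i) \<in> W1 \<and> (\<chi> j. v $ Inr j) \<in> W2}"

(* Sym^2 and Alt^2 of C^n as subspaces of C^n \<otimes> C^n = C^(n x n);
   Sym^2(r) is r \<otimes> r restricted to sym_space, Alt^2(r) is r \<otimes> r restricted to alt_space *)
definition sym_space :: "(complex^('n::finite \<times> 'n)) set" where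
  "sym_space = {v. \<forall>i j. v $ (i, j) = v $ (j, i)}"

definition alt_space :: "(complex^('n::finite \<times> 'n)) set" where
  "alt_space = {v. \<forall>i j. v $ (i, j) = - v $ (j, i)}"

(* number of singlets (multiplicity of the trivial representation) of the
   representation rho of G on W: complex dimension of the G-invariant vectors in W *)
definition num_singlets :: "('g, 'b) monoid_scheme \<Rightarrow> ('g \<Rightarrow> complex^'i^'i) \<Rightarrow> (complex^'i) set \<Rightarrow> nat" where
  "num_singlets G rho W = vec.dim {v \<in> W. \<forall>g \<in> carrier G. rho g *v v = v}"

(* The NHDM potential V_H = mu_ij (Phi_i^+ Phi_j) + z_{ij,kl} (Phi_i^+ Phi_j)(Phi_k^+ Phi_l).
   mu is indexed by (i,j), z by ((i,j),(k,l)).  Substituting Phi_i \<mapsto> r_ij Phi_j gives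
   the induced action on the coefficients below. *)
definition herm_mu :: "complex^('n::finite \<times> 'n) \<Rightarrow> bool" where
  "herm_mu \<mu> \<longleftrightarrow> (\<forall>i j. \<mu> $ (i, j) = cnj (\<mu> $ (j, i)))"

definition herm_z :: "complex^(('n::finite \<times> 'n) \<times> ('n \<times> 'n)) \<Rightarrow> bool" where
  "herm_z z \<longleftrightarrow> (\<forall>i j k l. z $ ((i, j), (k, l)) = z $ ((k, l), (i, j))
                        \<and> z $ ((i, j), (k, l)) = cnj (z $ ((j, i), (l, k))))"

definition act_mu :: "complex^'n::finite^'n \<Rightarrow> complex^('n \<times> 'n) \<Rightarrow> complex^('n \<times> 'n)" where
  "act_mu U \<mu> = (\<chi> p. \<Sum>i\<in>UNIV. \<Sum>j\<in>UNIV. cnj (U $ i $ fst p) * \<mu> $ (i, j) * U $ j $ snd p)"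

definition act_z :: "complex^'n::finite^'n \<Rightarrow> complex^(('n \<times> 'n) \<times> ('n \<times> 'n)) \<Rightarrow> complex^(('n \<times> 'n) \<times> ('n \<times> 'n))" where
  "act_z U z = (\<chi> q. \<Sum>i\<in>UNIV. \<Sum>j\<in>UNIV. \<Sum>k\<in>UNIV. \<Sum>l\<in>UNIV.
       cnj (U $ i $ fst (fst q)) * U $ j $ snd (fst q) * cnj (U $ k $ fst (snd q)) * U $ l $ snd (snd q) * z $ ((i, j), (k, l)))"

definition invariant_potentials ::
  "('g, 'b) monoid_scheme \<Rightarrow> ('g \<Rightarrow> complex^'n::finite^'n) \<Rightarrow>
   ((complex^('n \<times> 'n)) \<times> (complex^(('n \<times> 'n) \<times> ('n \<times> 'n)))) set" where
  "invariant_potentials G r = {(\<mu>, z). herm_mu \<mu> \<and> herm_z z \<and>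
      (\<forall>g \<in> carrier G. act_mu (r g) \<mu> = \<mu> \<and> act_z (r g) z = z)}"

end

theory Submission
  imports Defs
begin

(* Write w_{(i,k),(j,l)} = z_{ij,kl} and take the transpose of mu.  Since r(g^-1) = r(g)^dagger,
   invariance of (mu, z) under all r(g) is invariance of (mu^T, w) under the representations
   conj r (x) r and (r (x) r) (x) (conj r (x) conj r).  The symmetry z_{ij,kl} = z_{kl,ij} says
   that w is invariant under swapping both index pairs at once, i.e. w = s + a with s in
   Sym^2 (x) Sym^2 and a in Alt^2 (x) Alt^2, and hermiticity says that (mu^T, s, a) is fixed
   by the antilinear involution "conjugate and swap", which commutes with the group action.
   So the invariant potentials are the real points of the complex space S of singlets, and the
   real points of an antilinear involution of S form a real form: every x in S is h1 + i h2 with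
   h1, h2 real points, and a real basis of the real points stays independent over C. *)

section \<open>Antilinear involutions and real forms\<close>

definition antilinear_involution :: "(complex^'i \<Rightarrow> complex^'i) \<Rightarrow> bool" where
  "antilinear_involution \<sigma> \<longleftrightarrow>
     (\<forall>x y. \<sigma> (x + y) = \<sigma> x + \<sigma> y) \<and> (\<forall>c x. \<sigma> (c *s x) = cnj c *s \<sigma> x) \<and> (\<forall>x. \<sigma> (\<sigma> x) = x)"

lemma
  assumes "antilinear_involution \<sigma>"
  shows antilinear_involution_add: "\<sigma> (x + y) = \<sigma> x + \<sigma> y"
    and antilinear_involution_scale: "\<sigma> (c *s x) = cnj c *s \<sigma> x"
    and antilinear_involution_involutive: "\<sigma> (\<sigma> x) = x"
  using assms unfolding antilinear_involution_def by blast+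

lemma antilinear_involution_zero:
  assumes "antilinear_involution \<sigma>"
  shows "\<sigma> 0 = 0"
  using antilinear_involution_scale[OF assms, of 0 0] by simp

lemma antilinear_involution_sum:
  assumes "antilinear_involution \<sigma>"
  shows "\<sigma> (\<Sum>v\<in>t. u v *s f v) = (\<Sum>v\<in>t. cnj (u v) *s \<sigma> (f v))"
proof -
  interpret additive \<sigma>
    by unfold_locales (rule antilinear_involution_add[OF assms])
  show ?thesis
    by (simp add: sum antilinear_involution_scale[OF assms])
qed

lemma scaleR_eq_scale_of_real: "(c::real) *\<^sub>R (x::complex^'i) = complex_of_real c *s x"
  unfolding vec_eq_iff by (intro allI, subst vector_scaleR_component) (simp add: scaleR_conv_of_real)

lemma vec_subspace_imp_subspace: "vec.subspace (S::(complex^'i) set) \<Longrightarrow> subspace S"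
  unfolding subspace_def vec.subspace_def by (simp add: scaleR_eq_scale_of_real)

lemma in_span_fixed_points:
  assumes S: "vec.subspace S" "\<And>x. x \<in> S \<Longrightarrow> \<sigma> x \<in> S" and \<sigma>: "antilinear_involution \<sigma>"
    and x: "x \<in> S"
  shows "x \<in> vec.span {x \<in> S. \<sigma> x = x}"
proof -
  let ?H = "{x \<in> S. \<sigma> x = x}"
  define re im where "re = (1/2) *s (x + \<sigma> x)" and "im = (- \<i>/2) *s (x + (-1) *s \<sigma> x)"
  have "re \<in> S" "im \<in> S"
    unfolding re_def im_def using S x
    by (intro vec.subspace_scale[OF S(1)] vec.subspace_add[OF S(1)]; simp)+
  moreover have "\<sigma> re = re" "\<sigma> im = im"
    unfolding re_def im_def
    by (simp_all only: antilinear_involution_add[OF \<sigma>] antilinear_involution_scale[OF \<sigma>]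
        antilinear_involution_involutive[OF \<sigma>]) (simp_all add: vec_eq_iff field_simps)
  ultimately have "re + \<i> *s im \<in> vec.span ?H"
    by (intro vec.span_add vec.span_scale vec.span_base) auto
  moreover have "x = re + \<i> *s im"
    unfolding re_def im_def by (simp add: vec_eq_iff field_simps)
  ultimately show ?thesis
    by simp
qed

lemma vec_independent_fixed_points:
  assumes \<sigma>: "antilinear_involution \<sigma>" and B: "\<forall>v\<in>B. \<sigma> v = v" and ind: "independent B"
  shows "vec.independent B"
  unfolding vec.independent_explicit_module
proof (intro allI impI)
  fix t u v assume t: "finite t" "t \<subseteq> B" and u: "(\<Sum>v\<in>t. u v *s v) = 0" and v: "v \<in> t"
  have real_independent:
    "\<And>s c y. finite s \<Longrightarrow> s \<subseteq> B \<Longrightarrow> (\<Sum>y\<in>s. c y *\<^sub>R y) = 0 \<Longrightarrow> y \<in> s \<Longrightarrow> c y = 0"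
    using ind unfolding independent_explicit_module by blast
  have Re_zero: "Re (u' v) = 0" if u': "(\<Sum>v\<in>t. u' v *s v) = 0" for u'
  proof -
    have "(\<Sum>v\<in>t. cnj (u' v) *s v) = (\<Sum>v\<in>t. cnj (u' v) *s \<sigma> v)"
      using t B by (intro sum.cong) auto
    also have "\<dots> = \<sigma> (\<Sum>v\<in>t. u' v *s v)"
      by (rule antilinear_involution_sum[OF \<sigma>, where f = "\<lambda>v. v", symmetric])
    also have "\<dots> = 0"
      using u' antilinear_involution_zero[OF \<sigma>] by simp
    finally have "(\<Sum>v\<in>t. (u' v + cnj (u' v)) *s v) = 0"
      using u' by (simp add: vec.scale_left_distrib sum.distrib)
    then have "(\<Sum>v\<in>t. (2 * Re (u' v)) *\<^sub>R v) = 0"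
      by (simp add: scaleR_eq_scale_of_real complex_add_cnj)
    from real_independent[OF t this v] show ?thesis by simp
  qed
  have "(\<Sum>v\<in>t. (- \<i> * u v) *s v) = (- \<i>) *s (\<Sum>v\<in>t. u v *s v)"
    by (simp add: vec.scale_sum_right)
  then have "(\<Sum>v\<in>t. (- \<i> * u v) *s v) = 0"
    using u by simp
  from Re_zero[OF this] Re_zero[OF u] show "u v = 0"
    by (simp add: complex_eq_iff)
qed

lemma dim_fixed_points_antilinear_involution:
  assumes S: "vec.subspace S" "\<And>x. x \<in> S \<Longrightarrow> \<sigma> x \<in> S" and \<sigma>: "antilinear_involution \<sigma>"
  shows "dim {x \<in> S. \<sigma> x = x} = vec.dim S"
proof -
  let ?H = "{x \<in> S. \<sigma> x = x}"
  obtain B where B: "B \<subseteq> ?H" "independent B" "?H \<subseteq> span B" "card B = dim ?H"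
    using basis_exists by blast
  have "span B \<subseteq> vec.span B"
    by (rule span_minimal[OF vec.span_superset vec_subspace_imp_subspace[OF vec.subspace_span]])
  with B(3) have "vec.span ?H \<subseteq> vec.span B"
    by (intro vec.span_minimal[OF _ vec.subspace_span]) blast
  then have "S \<subseteq> vec.span B"
    using in_span_fixed_points[OF S \<sigma>] by blast
  moreover have "vec.independent B"
    using B by (intro vec_independent_fixed_points[OF \<sigma>]) auto
  moreover have "B \<subseteq> S"
    using B(1) by blast
  ultimately have "card B = vec.dim S"
    by (intro vec.basis_card_eq_dim)
  with B(4) show ?thesis by simp
qed

section \<open>Unitary representations\<close>

definition cnj_transpose :: "complex^'n^'n \<Rightarrow> complex^'n^'n" where
  "cnj_transpose U = (\<chi> i j. cnj (U $ j $ i))"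

lemma unitary_mat_iff: "unitary_mat U \<longleftrightarrow> cnj_transpose U ** U = mat 1"
  by (simp add: unitary_mat_def cnj_transpose_def)

locale unitary_rep =
  fixes G :: "('g, 'b) monoid_scheme" and r :: "'g \<Rightarrow> complex^'n^'n"
  assumes group: "group G"
    and unitary: "\<And>g. g \<in> carrier G \<Longrightarrow> unitary_mat (r g)"
    and mult: "\<And>g h. g \<in> carrier G \<Longrightarrow> h \<in> carrier G \<Longrightarrow> r (g \<otimes>\<^bsub>G\<^esub> h) = r g ** r h"
begin

lemma rep_one: "r \<one>\<^bsub>G\<^esub> = mat 1"
proof -
  let ?U = "r \<one>\<^bsub>G\<^esub>"
  have one: "\<one>\<^bsub>G\<^esub> \<in> carrier G"
    using group by (simp add: group.is_monoid monoid.one_closed)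
  have "?U ** ?U = ?U"
    using mult[OF one one] group by (simp add: group.is_monoid monoid.l_one one)
  moreover have "cnj_transpose ?U ** ?U = mat 1"
    using unitary[OF one] by (simp add: unitary_mat_iff)
  ultimately show ?thesis
    by (metis matrix_mul_assoc matrix_mul_lid)
qed

lemma rep_inv:
  assumes g: "g \<in> carrier G"
  shows "r (inv\<^bsub>G\<^esub> g) = cnj_transpose (r g)"
proof -
  have ig: "inv\<^bsub>G\<^esub> g \<in> carrier G"
    using group g by (simp add: group.inv_closed)
  have "r g ** r (inv\<^bsub>G\<^esub> g) = mat 1"
    using mult[OF g ig] g group by (simp add: group.r_inv rep_one)
  moreover have "cnj_transpose (r g) ** r g = mat 1"
    using unitary[OF g] by (simp add: unitary_mat_iff)
  ultimately show ?thesis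
    by (metis matrix_mul_assoc matrix_mul_lid matrix_mul_rid)
qed

lemma ball_carrier_cnj_transpose:
  "(\<forall>g\<in>carrier G. P (cnj_transpose (r g))) \<longleftrightarrow> (\<forall>g\<in>carrier G. P (r g))"
proof
  assume P: "\<forall>g\<in>carrier G. P (cnj_transpose (r g))"
  show "\<forall>g\<in>carrier G. P (r g)"
  proof
    fix g assume g: "g \<in> carrier G"
    have ig: "inv\<^bsub>G\<^esub> g \<in> carrier G"
      using group g by (simp add: group.inv_closed)
    have "r g = cnj_transpose (r (inv\<^bsub>G\<^esub> g))"
      using rep_inv[OF ig] group g by (simp add: group.inv_inv)
    with P ig show "P (r g)" by simp
  qed
next
  assume P: "\<forall>g\<in>carrier G. P (r g)"
  show "\<forall>g\<in>carrier G. P (cnj_transpose (r g))"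
    using P rep_inv group by (metis group.inv_closed)
qed

end

section \<open>Reindexing coefficients\<close>

lemma sum_UNIV_prod: "(\<Sum>q\<in>UNIV. f q) = (\<Sum>x\<in>UNIV. \<Sum>y\<in>UNIV. f (x, y))"
  by (simp add: sum.cartesian_product flip: UNIV_Times_UNIV)

lemma matrix_vector_mult_reindex:
  assumes h: "bij h" and A: "\<And>p q. A $ h p $ h q = A $ p $ q"
  shows "A *v (\<chi> p. v $ h p) = (\<chi> p. (A *v v) $ h p)"
proof -
  have "(\<Sum>q\<in>UNIV. A $ p $ q * v $ h q) = (\<Sum>q\<in>UNIV. A $ h p $ q * v $ q)" for p
    using sum.reindex_bij_betw[OF h, of "\<lambda>q. A $ h p $ q * v $ q"] by (simp add: A)
  then show ?thesis
    by (simp add: matrix_vector_mult_def vec_eq_iff)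
qed

lemma matrix_vector_mult_cnj_reindex:
  assumes h: "bij h" and A: "\<And>p q. A $ h p $ h q = cnj (A $ p $ q)"
  shows "A *v (\<chi> p. cnj (v $ h p)) = (\<chi> p. cnj ((A *v v) $ h p))"
proof -
  have "(\<Sum>q\<in>UNIV. A $ p $ q * cnj (v $ h q)) = cnj (\<Sum>q\<in>UNIV. A $ h p $ q * v $ q)" for p
    using sum.reindex_bij_betw[OF h, of "\<lambda>q. cnj (A $ h p $ q * v $ q)"]
    by (simp add: A cnj_sum)
  then show ?thesis
    by (simp add: matrix_vector_mult_def vec_eq_iff)
qed

definition swap_index :: "complex^('a::finite \<times> 'b::finite) \<Rightarrow> complex^('b \<times> 'a)" where
  "swap_index v = (\<chi> p. v $ prod.swap p)"

definition conj_swap :: "complex^('a::finite \<times> 'a) \<Rightarrow> complex^('a \<times> 'a)" where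
  "conj_swap v = (\<chi> p. cnj (v $ prod.swap p))"

definition interchange :: "('a \<times> 'b) \<times> ('c \<times> 'd) \<Rightarrow> ('a \<times> 'c) \<times> ('b \<times> 'd)" where
  "interchange q = ((fst (fst q), fst (snd q)), (snd (fst q), snd (snd q)))"

definition regroup ::
  "complex^(('a::finite \<times> 'b::finite) \<times> ('c::finite \<times> 'd::finite)) \<Rightarrow> complex^(('a \<times> 'c) \<times> ('b \<times> 'd))"
  where "regroup z = (\<chi> q. z $ interchange q)"

lemma interchange_interchange [simp]: "interchange (interchange q) = q"
  by (simp add: interchange_def)

lemma swap_index_swap_index [simp]: "swap_index (swap_index v) = v"
  by (simp add: swap_index_def vec_eq_iff)

lemma regroup_regroup [simp]: "regroup (regroup z) = z"
  by (simp add: regroup_def vec_eq_iff)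

lemma swap_index_eq_iff: "swap_index v = swap_index w \<longleftrightarrow> v = w"
  by (metis swap_index_swap_index)

lemma regroup_eq_iff: "regroup z = regroup z' \<longleftrightarrow> z = z'"
  by (metis regroup_regroup)

lemma swap_index_add: "swap_index (v + w) = swap_index v + swap_index w"
  and swap_index_scale: "swap_index (c *s v) = c *s swap_index v"
  and regroup_add: "regroup (z + z') = regroup z + regroup z'"
  and regroup_scale: "regroup (c *s z) = c *s regroup z"
  by (simp_all add: swap_index_def regroup_def vec_eq_iff)

lemma antilinear_involution_conj_swap: "antilinear_involution conj_swap"
  by (simp add: antilinear_involution_def conj_swap_def vec_eq_iff)

abbreviation mu_rep :: "('g \<Rightarrow> complex^'n::finite^'n) \<Rightarrow> 'g \<Rightarrow> complex^('n \<times> 'n)^('n \<times> 'n)" where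
  "mu_rep r \<equiv> tensor_rep (conj_rep r) r"

abbreviation z_rep ::
  "('g \<Rightarrow> complex^'n::finite^'n) \<Rightarrow> 'g \<Rightarrow> complex^(('n \<times> 'n) \<times> ('n \<times> 'n))^(('n \<times> 'n) \<times> ('n \<times> 'n))"
  where "z_rep r \<equiv> tensor_rep (tensor_rep r r) (tensor_rep (conj_rep r) (conj_rep r))"

lemma mu_rep_swap_index:
  "mu_rep r g *v swap_index \<mu> = swap_index (act_mu (cnj_transpose (r g)) \<mu>)"
proof -
  have "(\<Sum>q\<in>UNIV. cnj (r g $ a $ fst q) * r g $ b $ snd q * \<mu> $ prod.swap q)
      = (\<Sum>q\<in>UNIV. cnj (r g $ a $ snd q) * r g $ b $ fst q * \<mu> $ q)" for a b
    using sum.reindex_bij_betw[OF bij_swap, of "\<lambda>q. cnj (r g $ a $ snd q) * r g $ b $ fst q * \<mu> $ q"]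
    by simp
  then show ?thesis
    by (simp add: vec_eq_iff matrix_vector_mult_def tensor_rep_def conj_rep_def swap_index_def
        act_mu_def cnj_transpose_def sum_UNIV_prod mult_ac)
qed

lemma z_rep_regroup:
  "z_rep r g *v regroup z = regroup (act_z (cnj_transpose (r g)) z)"
proof -
  let ?M = "z_rep r g"
  have "(\<Sum>q\<in>UNIV. ?M $ p $ q * z $ interchange q) = (\<Sum>q\<in>UNIV. ?M $ p $ interchange q * z $ q)" for p
    using sum.reindex_bij_betw[OF involuntory_imp_bij[OF interchange_interchange], of "\<lambda>q. ?M $ p $ interchange q * z $ q"]
    by simp
  then show ?thesis
    by (simp add: vec_eq_iff matrix_vector_mult_def tensor_rep_def conj_rep_def regroup_def
        act_z_def cnj_transpose_def interchange_def sum_UNIV_prod mult_ac)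
qed

lemma mu_rep_conj_swap:
  "mu_rep r g *v conj_swap v = conj_swap (mu_rep r g *v v)"
  unfolding conj_swap_def
  by (rule matrix_vector_mult_cnj_reindex) (simp_all add: tensor_rep_def conj_rep_def)

lemma z_rep_conj_swap:
  "z_rep r g *v conj_swap w = conj_swap (z_rep r g *v w)"
  unfolding conj_swap_def
  by (rule matrix_vector_mult_cnj_reindex) (simp_all add: tensor_rep_def conj_rep_def mult_ac)

section \<open>Symmetric and antisymmetric tensors\<close>

definition swap_eigenspace :: "complex \<Rightarrow> (complex^('n::finite \<times> 'n)) set" where
  "swap_eigenspace e = {v. \<forall>i j. v $ (i, j) = e * v $ (j, i)}"

definition bi_swap_eigenspace :: "complex \<Rightarrow> (complex^(('n::finite \<times> 'n) \<times> ('n \<times> 'n))) set" where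
  "bi_swap_eigenspace e = {w. \<forall>a b c d.
     w $ ((a, b), (c, d)) = e * w $ ((b, a), (c, d)) \<and> w $ ((a, b), (c, d)) = e * w $ ((a, b), (d, c))}"

lemma sym_space_eq: "sym_space = swap_eigenspace 1"
  by (simp add: sym_space_def swap_eigenspace_def)

lemma alt_space_eq: "alt_space = swap_eigenspace (-1)"
  by (simp add: alt_space_def swap_eigenspace_def)

lemma bi_swap_eigenspaceD:
  assumes "w \<in> bi_swap_eigenspace e"
  shows "w $ ((a, b), (c, d)) = e * w $ ((b, a), (c, d))" "w $ ((a, b), (c, d)) = e * w $ ((a, b), (d, c))"
  using assms unfolding bi_swap_eigenspace_def by blast+

lemma subspace_bi_swap_eigenspace:
  "vec.subspace (bi_swap_eigenspace e :: (complex^(('n::finite \<times> 'n) \<times> ('n \<times> 'n))) set)"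
  unfolding vec.subspace_def
proof (intro conjI ballI allI)
  show "0 \<in> bi_swap_eigenspace e"
    by (simp add: bi_swap_eigenspace_def)
next
  fix x y :: "complex^(('n \<times> 'n) \<times> ('n \<times> 'n))"
  assume x: "x \<in> bi_swap_eigenspace e" and y: "y \<in> bi_swap_eigenspace e"
  show "x + y \<in> bi_swap_eigenspace e"
    unfolding bi_swap_eigenspace_def
  proof (intro CollectI allI conjI)
    fix a b c d
    show "(x + y) $ ((a, b), (c, d)) = e * (x + y) $ ((b, a), (c, d))"
      using bi_swap_eigenspaceD(1)[OF x, of a b c d] bi_swap_eigenspaceD(1)[OF y, of a b c d]
      by (simp add: distrib_left)
    show "(x + y) $ ((a, b), (c, d)) = e * (x + y) $ ((a, b), (d, c))"
      using bi_swap_eigenspaceD(2)[OF x, of a b c d] bi_swap_eigenspaceD(2)[OF y, of a b c d]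
      by (simp add: distrib_left)
  qed
next
  fix k and x :: "complex^(('n \<times> 'n) \<times> ('n \<times> 'n))"
  assume x: "x \<in> bi_swap_eigenspace e"
  show "k *s x \<in> bi_swap_eigenspace e"
    unfolding bi_swap_eigenspace_def
  proof (intro CollectI allI conjI)
    fix a b c d
    show "(k *s x) $ ((a, b), (c, d)) = e * (k *s x) $ ((b, a), (c, d))"
      using bi_swap_eigenspaceD(1)[OF x, of a b c d] by (simp add: mult.left_commute)
    show "(k *s x) $ ((a, b), (c, d)) = e * (k *s x) $ ((a, b), (d, c))"
      using bi_swap_eigenspaceD(2)[OF x, of a b c d] by (simp add: mult.left_commute)
  qed
qed

lemma conj_swap_bi_swap_eigenspace:
  assumes w: "w \<in> bi_swap_eigenspace e" and e: "cnj e = e"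
  shows "conj_swap w \<in> bi_swap_eigenspace e"
  unfolding bi_swap_eigenspace_def
proof (intro CollectI allI conjI)
  fix a b c d
  show "conj_swap w $ ((a, b), (c, d)) = e * conj_swap w $ ((b, a), (c, d))"
    using bi_swap_eigenspaceD(2)[OF w, of c d a b] e by (simp add: conj_swap_def)
  show "conj_swap w $ ((a, b), (c, d)) = e * conj_swap w $ ((a, b), (d, c))"
    using bi_swap_eigenspaceD(1)[OF w, of c d a b] e by (simp add: conj_swap_def)
qed

lemma tensor_in_bi_swap_eigenspace:
  assumes "v \<in> swap_eigenspace e" "w \<in> swap_eigenspace e"
  shows "(\<chi> p. v $ fst p * w $ snd p) \<in> bi_swap_eigenspace e"
proof -
  let ?t = "\<chi> p. v $ fst p * w $ snd p"
  have "?t $ ((a, b), (c, d)) = e * ?t $ ((b, a), (c, d)) \<and> ?t $ ((a, b), (c, d)) = e * ?t $ ((a, b), (d, c))"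
    for a b c d
  proof -
    have "v $ (a, b) = e * v $ (b, a)" "w $ (c, d) = e * w $ (d, c)"
      using assms unfolding swap_eigenspace_def by blast+
    then show ?thesis
      by (simp add: mult_ac)
  qed
  then show ?thesis
    unfolding bi_swap_eigenspace_def by blast
qed

lemma sum_prod_times_deltas:
  fixes f :: "'a::finite \<times> 'b::finite \<Rightarrow> complex"
  shows "(\<Sum>q\<in>UNIV. f q * ((of_bool (fst q = a) + e * of_bool (fst q = a'))
                         * (of_bool (snd q = b) + e * of_bool (snd q = b'))))
    = f (a, b) + e * f (a, b') + e * f (a', b) + e * e * f (a', b')"
  by (simp add: algebra_simps sum.distrib sum_UNIV_prod flip: sum_distrib_left)

text \<open>\<open>swap_delta e x\<close> is twice the projection of the basis vector at \<open>x\<close> to the \<open>e\<close>-eigenspace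
  of the swap.\<close>

definition swap_delta :: "complex \<Rightarrow> 'n \<times> 'n \<Rightarrow> complex^('n::finite \<times> 'n)" where
  "swap_delta e x = (\<chi> p. of_bool (x = p) + e * of_bool (x = prod.swap p))"

lemma swap_delta_in_swap_eigenspace:
  assumes "e * e = 1"
  shows "swap_delta e x \<in> swap_eigenspace e"
proof -
  have ee: "e * (e * z) = z" for z
    by (simp only: mult.assoc[symmetric] assms mult_1)
  show ?thesis
    by (simp add: swap_eigenspace_def swap_delta_def distrib_left add.commute ee)
qed

lemma bi_swap_eigenspace_expansion:
  fixes w :: "complex^(('n::finite \<times> 'n) \<times> ('n \<times> 'n))"
  assumes w: "w \<in> bi_swap_eigenspace e" and e: "e * e = 1"
  shows "w = (1/4) *s (\<Sum>q\<in>UNIV. w $ q *s (\<chi> p. swap_delta e (fst q) $ fst p * swap_delta e (snd q) $ snd p))"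
proof -
  have "w $ ((a, b), (c, d)) = (w $ ((a, b), (c, d)) + e * w $ ((a, b), (d, c))
      + e * w $ ((b, a), (c, d)) + e * e * w $ ((b, a), (d, c))) / 4" for a b c d
  proof -
    from bi_swap_eigenspaceD[OF w, of a b c d] bi_swap_eigenspaceD(2)[OF w, of b a c d]
    have "e * w $ ((a, b), (d, c)) = w $ ((a, b), (c, d))" "e * w $ ((b, a), (c, d)) = w $ ((a, b), (c, d))"
      "e * e * w $ ((b, a), (d, c)) = w $ ((a, b), (c, d))"
      by (simp_all only: mult.assoc)
    then show ?thesis
      by simp
  qed
  then show ?thesis
    unfolding vec_eq_iff
    by (simp add: swap_delta_def sum_component sum_prod_times_deltas[where f = "\<lambda>q. w $ q"])
qed

lemma tensor_space_swap_eigenspace: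
  assumes e: "e * e = 1"
  shows "tensor_space (swap_eigenspace e) (swap_eigenspace e)
    = (bi_swap_eigenspace e :: (complex^(('n::finite \<times> 'n) \<times> ('n \<times> 'n))) set)"
proof
  show "tensor_space (swap_eigenspace e) (swap_eigenspace e) \<subseteq> bi_swap_eigenspace e"
    unfolding tensor_space_def
    by (rule vec.span_minimal[OF _ subspace_bi_swap_eigenspace]) (auto intro: tensor_in_bi_swap_eigenspace)
next
  show "bi_swap_eigenspace e \<subseteq>
    (tensor_space (swap_eigenspace e) (swap_eigenspace e) :: (complex^(('n \<times> 'n) \<times> ('n \<times> 'n))) set)"
  proof
    fix w :: "complex^(('n \<times> 'n) \<times> ('n \<times> 'n))"
    assume w: "w \<in> bi_swap_eigenspace e"
    have tensor: "(\<chi> p. swap_delta e (fst q) $ fst p * swap_delta e (snd q) $ snd p)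
        \<in> tensor_space (swap_eigenspace e) (swap_eigenspace e)" for q
      unfolding tensor_space_def
      by (rule vec.span_base, rule CollectI, rule exI[of _ "swap_delta e (fst q)"],
          rule exI[of _ "swap_delta e (snd q)"]) (simp add: swap_delta_in_swap_eigenspace[OF e])
    have "(1/4) *s (\<Sum>q\<in>UNIV. w $ q *s (\<chi> p. swap_delta e (fst q) $ fst p * swap_delta e (snd q) $ snd p))
        \<in> tensor_space (swap_eigenspace e) (swap_eigenspace e)"
      unfolding tensor_space_def
      by (rule vec.span_scale, rule vec.span_sum, rule vec.span_scale, rule tensor[unfolded tensor_space_def])
    with bi_swap_eigenspace_expansion[OF w e]
    show "w \<in> tensor_space (swap_eigenspace e) (swap_eigenspace e)"
      by (rule ssubst)
  qed
qed

definition swap_left :: "complex^(('a::finite \<times> 'a) \<times> 'b::finite) \<Rightarrow> complex^(('a \<times> 'a) \<times> 'b)" where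
  "swap_left w = (\<chi> q. w $ (prod.swap (fst q), snd q))"

definition sym_part :: "complex^(('a::finite \<times> 'a) \<times> 'b::finite) \<Rightarrow> complex^(('a \<times> 'a) \<times> 'b)" where
  "sym_part w = (1/2) *s (w + swap_left w)"

definition alt_part :: "complex^(('a::finite \<times> 'a) \<times> 'b::finite) \<Rightarrow> complex^(('a \<times> 'a) \<times> 'b)" where
  "alt_part w = (1/2) *s (w - swap_left w)"

definition swap_both_invariant :: "complex^(('a::finite \<times> 'a) \<times> ('a \<times> 'a)) \<Rightarrow> bool" where
  "swap_both_invariant w \<longleftrightarrow> (\<forall>a b c d. w $ ((a, b), (c, d)) = w $ ((b, a), (d, c)))"

lemma sym_part_add_alt_part: "sym_part w + alt_part w = w"
  by (simp add: sym_part_def alt_part_def vec_eq_iff field_simps)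

lemma sym_part_component: "sym_part w $ ((a, b), q) = (w $ ((a, b), q) + w $ ((b, a), q)) / 2"
  and alt_part_component: "alt_part w $ ((a, b), q) = (w $ ((a, b), q) - w $ ((b, a), q)) / 2"
  by (simp_all add: sym_part_def alt_part_def swap_left_def)

lemma sym_part_add: "sym_part (v + w) = sym_part v + sym_part w"
  and sym_part_scale: "sym_part (c *s v) = c *s sym_part v"
  and alt_part_add: "alt_part (v + w) = alt_part v + alt_part w"
  and alt_part_scale: "alt_part (c *s v) = c *s alt_part v"
  by (simp_all add: sym_part_def alt_part_def swap_left_def vec_eq_iff field_simps)

lemma sym_alt_part_eq:
  assumes s: "s \<in> bi_swap_eigenspace 1" and a: "a \<in> bi_swap_eigenspace (-1)"
  shows "sym_part (s + a) = s" "alt_part (s + a) = a"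
proof -
  have "sym_part (s + a) $ ((i, j), q) = s $ ((i, j), q)" "alt_part (s + a) $ ((i, j), q) = a $ ((i, j), q)"
    for i j q
    using bi_swap_eigenspaceD(1)[OF s, of i j "fst q" "snd q"] bi_swap_eigenspaceD(1)[OF a, of i j "fst q" "snd q"]
    by (simp_all add: sym_part_component alt_part_component)
  then show "sym_part (s + a) = s" "alt_part (s + a) = a"
    by (simp_all add: vec_eq_iff split_paired_All)
qed

lemma swap_both_invariant_add:
  assumes s: "s \<in> bi_swap_eigenspace 1" and a: "a \<in> bi_swap_eigenspace (-1)"
  shows "swap_both_invariant (s + a)"
  unfolding swap_both_invariant_def
proof (intro allI)
  fix i j k l
  show "(s + a) $ ((i, j), (k, l)) = (s + a) $ ((j, i), (l, k))"
    using bi_swap_eigenspaceD(1)[OF s, of i j k l] bi_swap_eigenspaceD(2)[OF s, of j i k l]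
      bi_swap_eigenspaceD(1)[OF a, of i j k l] bi_swap_eigenspaceD(2)[OF a, of j i k l]
    by simp
qed

lemma swap_both_invariant_iff:
  "swap_both_invariant w \<longleftrightarrow> sym_part w \<in> bi_swap_eigenspace 1 \<and> alt_part w \<in> bi_swap_eigenspace (-1)"
proof
  assume "swap_both_invariant w"
  then have swap: "w $ ((a, b), (d, c)) = w $ ((b, a), (c, d))" for a b c d
    unfolding swap_both_invariant_def by blast
  show "sym_part w \<in> bi_swap_eigenspace 1 \<and> alt_part w \<in> bi_swap_eigenspace (-1)"
    unfolding bi_swap_eigenspace_def
  proof (intro conjI CollectI allI)
    fix a b c d
    show "sym_part w $ ((a, b), (c, d)) = 1 * sym_part w $ ((b, a), (c, d))"
      "alt_part w $ ((a, b), (c, d)) = - 1 * alt_part w $ ((b, a), (c, d))"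
      by (simp_all add: sym_part_component alt_part_component field_simps)
    show "sym_part w $ ((a, b), (c, d)) = 1 * sym_part w $ ((a, b), (d, c))"
      "alt_part w $ ((a, b), (c, d)) = - 1 * alt_part w $ ((a, b), (d, c))"
      using swap[of a b c d] swap[of b a c d]
      by (simp_all add: sym_part_component alt_part_component field_simps)
  qed
next
  assume "sym_part w \<in> bi_swap_eigenspace 1 \<and> alt_part w \<in> bi_swap_eigenspace (-1)"
  then show "swap_both_invariant w"
    using swap_both_invariant_add sym_part_add_alt_part by metis
qed

lemma fixed_iff_sym_alt_parts_fixed:
  assumes "Modules.additive f" and half: "\<And>x. f ((1/2) *s x) = (1/2) *s f x"
    and swap: "f (swap_left w) = swap_left (f w)"
  shows "f w = w \<longleftrightarrow> f (sym_part w) = sym_part w \<and> f (alt_part w) = alt_part w"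
proof
  interpret additive f by fact
  assume fixed: "f w = w"
  show "f (sym_part w) = sym_part w \<and> f (alt_part w) = alt_part w"
    by (simp add: sym_part_def alt_part_def half add diff swap fixed)
next
  interpret additive f by fact
  assume "f (sym_part w) = sym_part w \<and> f (alt_part w) = alt_part w"
  then have "f (sym_part w + alt_part w) = sym_part w + alt_part w"
    by (simp add: add)
  then show "f w = w"
    by (simp only: sym_part_add_alt_part)
qed

lemma conj_swap_swap_left:
  assumes "swap_both_invariant w"
  shows "conj_swap (swap_left w) = swap_left (conj_swap w)"
proof -
  have "w $ ((d, c), (a, b)) = w $ ((c, d), (b, a))" for a b c d
    using assms unfolding swap_both_invariant_def by blast
  then show ?thesis
    by (simp add: conj_swap_def swap_left_def vec_eq_iff split_paired_All)
qed

lemma z_rep_swap_left: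
  "z_rep r g *v swap_left w = swap_left (z_rep r g *v w)"
  unfolding swap_left_def
  by (rule matrix_vector_mult_reindex[where h = "\<lambda>q. (prod.swap (fst q), snd q)"])
    (simp_all add: involuntory_imp_bij tensor_rep_def)

lemma conj_swap_fixed_iff_sym_alt_parts:
  assumes "swap_both_invariant w"
  shows "conj_swap w = w \<longleftrightarrow> conj_swap (sym_part w) = sym_part w \<and> conj_swap (alt_part w) = alt_part w"
proof (rule fixed_iff_sym_alt_parts_fixed)
  show "Modules.additive conj_swap"
    by unfold_locales (rule antilinear_involution_add[OF antilinear_involution_conj_swap])
  show "conj_swap ((1/2) *s x) = (1/2) *s conj_swap x" for x
    by (simp add: antilinear_involution_scale[OF antilinear_involution_conj_swap])
qed (rule conj_swap_swap_left[OF assms])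

lemma z_rep_fixes_iff_sym_alt_parts:
  "z_rep r g *v w = w \<longleftrightarrow> z_rep r g *v sym_part w = sym_part w \<and> z_rep r g *v alt_part w = alt_part w"
proof (rule fixed_iff_sym_alt_parts_fixed)
  show "Modules.additive ((*v) (z_rep r g))"
    by unfold_locales (rule matrix_vector_right_distrib)
qed (simp_all add: vector_scalar_commute z_rep_swap_left)

section \<open>Direct sums and invariant vectors\<close>

definition inl_part :: "complex^('i::finite + 'j::finite) \<Rightarrow> complex^'i" where
  "inl_part v = (\<chi> i. v $ Inl i)"

definition inr_part :: "complex^('i::finite + 'j::finite) \<Rightarrow> complex^'j" where
  "inr_part v = (\<chi> j. v $ Inr j)"

definition dsum_vec :: "complex^'i::finite \<Rightarrow> complex^'j::finite \<Rightarrow> complex^('i + 'j)" where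
  "dsum_vec x y = (\<chi> a. case a of Inl i \<Rightarrow> x $ i | Inr j \<Rightarrow> y $ j)"

lemma inl_part_dsum_vec [simp]: "inl_part (dsum_vec x y) = x"
  and inr_part_dsum_vec [simp]: "inr_part (dsum_vec x y) = y"
  by (simp_all add: inl_part_def inr_part_def dsum_vec_def)

lemma dsum_vec_parts [simp]: "dsum_vec (inl_part v) (inr_part v) = v"
  by (simp add: dsum_vec_def inl_part_def inr_part_def vec_eq_iff split: sum.split)

lemma dsum_vec_eq_iff: "dsum_vec x y = dsum_vec x' y' \<longleftrightarrow> x = x' \<and> y = y'"
  by (metis inl_part_dsum_vec inr_part_dsum_vec)

lemma dsum_vec_add: "dsum_vec x y + dsum_vec x' y' = dsum_vec (x + x') (y + y')"
  and dsum_vec_scale: "c *s dsum_vec x y = dsum_vec (c *s x) (c *s y)"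
  by (simp_all add: dsum_vec_def vec_eq_iff split: sum.split)

lemma inl_part_add [simp]: "inl_part (v + w) = inl_part v + inl_part w"
  and inr_part_add [simp]: "inr_part (v + w) = inr_part v + inr_part w"
  and inl_part_scale [simp]: "inl_part (c *s v) = c *s inl_part v"
  and inr_part_scale [simp]: "inr_part (c *s v) = c *s inr_part v"
  and inl_part_zero [simp]: "inl_part 0 = 0"
  and inr_part_zero [simp]: "inr_part 0 = 0"
  by (simp_all add: inl_part_def inr_part_def vec_eq_iff)

lemma mem_dsum_space: "v \<in> dsum_space W1 W2 \<longleftrightarrow> inl_part v \<in> W1 \<and> inr_part v \<in> W2"
  by (simp add: dsum_space_def inl_part_def inr_part_def)

lemma dsum_vec_in_dsum_space [simp]: "dsum_vec x y \<in> dsum_space W1 W2 \<longleftrightarrow> x \<in> W1 \<and> y \<in> W2"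
  by (simp add: mem_dsum_space)

lemma subspace_dsum_space:
  assumes "vec.subspace W1" "vec.subspace W2"
  shows "vec.subspace (dsum_space W1 W2)"
  using assms unfolding vec.subspace_def by (simp add: mem_dsum_space)

lemma dsum_rep_mult_vec: "dsum_rep r1 r2 g *v v = dsum_vec (r1 g *v inl_part v) (r2 g *v inr_part v)"
proof -
  have UNIV_sum: "(\<Sum>a\<in>UNIV. f a) = (\<Sum>i\<in>UNIV. f (Inl i)) + (\<Sum>j\<in>UNIV. f (Inr j))"
    for f :: "'a + 'b \<Rightarrow> complex"
    by (simp add: sum.Plus flip: UNIV_Plus_UNIV)
  show ?thesis
    by (simp add: vec_eq_iff matrix_vector_mult_def dsum_rep_def dsum_vec_def inl_part_def inr_part_def
        UNIV_sum split: sum.split)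
qed

lemma dsum_rep_fixes_iff:
  "dsum_rep r1 r2 g *v v = v \<longleftrightarrow> r1 g *v inl_part v = inl_part v \<and> r2 g *v inr_part v = inr_part v"
proof -
  have "dsum_rep r1 r2 g *v v = v \<longleftrightarrow>
      dsum_vec (r1 g *v inl_part v) (r2 g *v inr_part v) = dsum_vec (inl_part v) (inr_part v)"
    by (simp only: dsum_rep_mult_vec dsum_vec_parts)
  then show ?thesis
    by (simp only: dsum_vec_eq_iff)
qed

definition invariants ::
  "('g, 'b) monoid_scheme \<Rightarrow> ('g \<Rightarrow> complex^'i^'i) \<Rightarrow> (complex^'i) set \<Rightarrow> (complex^'i) set" where
  "invariants G rho W = {v \<in> W. \<forall>g\<in>carrier G. rho g *v v = v}"

lemma num_singlets_eq_dim_invariants: "num_singlets G rho W = vec.dim (invariants G rho W)"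
  by (simp add: num_singlets_def invariants_def)

lemma invariants_dsum_rep:
  "invariants G (dsum_rep r1 r2) (dsum_space W1 W2) = dsum_space (invariants G r1 W1) (invariants G r2 W2)"
  by (auto simp: invariants_def mem_dsum_space dsum_rep_fixes_iff)

lemma subspace_invariants:
  assumes "vec.subspace W"
  shows "vec.subspace (invariants G rho W)"
  using assms unfolding vec.subspace_def invariants_def
  by (simp add: matrix_vector_right_distrib vector_scalar_commute)

lemma invariants_stable:
  assumes "v \<in> invariants G rho W" and "\<And>x. x \<in> W \<Longrightarrow> \<sigma> x \<in> W"
    and "\<And>g x. g \<in> carrier G \<Longrightarrow> rho g *v \<sigma> x = \<sigma> (rho g *v x)"
  shows "\<sigma> v \<in> invariants G rho W"
  using assms unfolding invariants_def by simp

definition dsum_map ::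
  "(complex^'i \<Rightarrow> complex^'i) \<Rightarrow> (complex^'j \<Rightarrow> complex^'j) \<Rightarrow> complex^('i::finite + 'j::finite) \<Rightarrow> complex^('i + 'j)"
  where "dsum_map f g v = dsum_vec (f (inl_part v)) (g (inr_part v))"

lemma antilinear_involution_dsum_map:
  assumes "antilinear_involution f" "antilinear_involution g"
  shows "antilinear_involution (dsum_map f g)"
  unfolding antilinear_involution_def dsum_map_def using assms
  by (simp add: antilinear_involution_add antilinear_involution_scale antilinear_involution_involutive
      dsum_vec_add dsum_vec_scale)

lemma dsum_map_in_dsum_space:
  assumes "\<And>x. x \<in> W1 \<Longrightarrow> f x \<in> W1" "\<And>y. y \<in> W2 \<Longrightarrow> g y \<in> W2" "v \<in> dsum_space W1 W2"
  shows "dsum_map f g v \<in> dsum_space W1 W2"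
  using assms by (simp add: dsum_map_def mem_dsum_space)

section \<open>The coefficient vector of a potential\<close>

lemma herm_mu_iff: "herm_mu \<mu> \<longleftrightarrow> conj_swap (swap_index \<mu>) = swap_index \<mu>"
proof -
  have "conj_swap (swap_index \<mu>) = swap_index \<mu> \<longleftrightarrow> (\<forall>i j. cnj (\<mu> $ (j, i)) = \<mu> $ (i, j))"
    by (auto simp: conj_swap_def swap_index_def vec_eq_iff)
  also have "\<dots> \<longleftrightarrow> herm_mu \<mu>"
    unfolding herm_mu_def by (metis complex_cnj_cnj)
  finally show ?thesis ..
qed

lemma herm_z_iff: "herm_z z \<longleftrightarrow> swap_both_invariant (regroup z) \<and> conj_swap (regroup z) = regroup z"
proof -
  have "swap_both_invariant (regroup z) \<longleftrightarrow> (\<forall>i j k l. z $ ((i, j), (k, l)) = z $ ((k, l), (i, j)))"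
    by (simp add: swap_both_invariant_def regroup_def interchange_def) blast
  moreover have "conj_swap (regroup z) = regroup z
      \<longleftrightarrow> (\<forall>i j k l. cnj (z $ ((j, i), (l, k))) = z $ ((i, j), (k, l)))"
    by (simp add: conj_swap_def regroup_def interchange_def vec_eq_iff split_paired_All) blast
  ultimately show ?thesis
    unfolding herm_z_def by (metis complex_cnj_cnj)
qed

definition coeff_vector ::
  "(complex^('n::finite \<times> 'n)) \<times> (complex^(('n \<times> 'n) \<times> ('n \<times> 'n)))
     \<Rightarrow> complex^(('n \<times> 'n) + (('n \<times> 'n) \<times> ('n \<times> 'n) + ('n \<times> 'n) \<times> ('n \<times> 'n)))" where
  "coeff_vector x =
     dsum_vec (swap_index (fst x)) (dsum_vec (sym_part (regroup (snd x))) (alt_part (regroup (snd x))))"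

abbreviation coeff_conj ::
  "complex^(('n::finite \<times> 'n) + (('n \<times> 'n) \<times> ('n \<times> 'n) + ('n \<times> 'n) \<times> ('n \<times> 'n)))
     \<Rightarrow> complex^(('n \<times> 'n) + (('n \<times> 'n) \<times> ('n \<times> 'n) + ('n \<times> 'n) \<times> ('n \<times> 'n)))" where
  "coeff_conj \<equiv> dsum_map conj_swap (dsum_map conj_swap conj_swap)"

definition coeff_singlets ::
  "('g, 'b) monoid_scheme \<Rightarrow> ('g \<Rightarrow> complex^'n::finite^'n)
     \<Rightarrow> (complex^(('n \<times> 'n) + (('n \<times> 'n) \<times> ('n \<times> 'n) + ('n \<times> 'n) \<times> ('n \<times> 'n)))) set" where
  "coeff_singlets G r = dsum_space (invariants G (mu_rep r) UNIV)
     (dsum_space (invariants G (z_rep r) (bi_swap_eigenspace 1)) (invariants G (z_rep r) (bi_swap_eigenspace (-1))))"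

lemma linear_coeff_vector: "linear coeff_vector"
  by (rule linearI)
    (simp_all add: coeff_vector_def scaleR_eq_scale_of_real swap_index_add swap_index_scale regroup_add
      regroup_scale sym_part_add sym_part_scale alt_part_add alt_part_scale dsum_vec_add dsum_vec_scale)

lemma inj_coeff_vector: "inj coeff_vector"
proof (rule injI)
  fix x y :: "(complex^('n::finite \<times> 'n)) \<times> (complex^(('n \<times> 'n) \<times> ('n \<times> 'n)))"
  assume "coeff_vector x = coeff_vector y"
  then have "swap_index (fst x) = swap_index (fst y)"
    and "sym_part (regroup (snd x)) + alt_part (regroup (snd x))
       = sym_part (regroup (snd y)) + alt_part (regroup (snd y))"
    by (simp_all add: coeff_vector_def dsum_vec_eq_iff)
  then show "x = y"
    by (simp add: swap_index_eq_iff sym_part_add_alt_part regroup_eq_iff prod_eq_iff)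
qed

lemma coeff_vector_surj:
  assumes "v \<in> dsum_space UNIV (dsum_space (bi_swap_eigenspace 1) (bi_swap_eigenspace (-1)))"
  shows "v \<in> range coeff_vector"
proof
  let ?s = "inl_part (inr_part v)" and ?a = "inr_part (inr_part v)"
  have "?s \<in> bi_swap_eigenspace 1" "?a \<in> bi_swap_eigenspace (-1)"
    using assms by (simp_all add: mem_dsum_space)
  then show "v = coeff_vector (swap_index (inl_part v), regroup (?s + ?a))"
    by (simp add: coeff_vector_def sym_alt_part_eq)
qed simp

lemma subspace_coeff_singlets: "vec.subspace (coeff_singlets G r)"
  unfolding coeff_singlets_def
  by (intro subspace_dsum_space subspace_invariants subspace_bi_swap_eigenspace vec.subspace_UNIV)

lemma antilinear_involution_coeff_conj: "antilinear_involution coeff_conj"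
  by (intro antilinear_involution_dsum_map antilinear_involution_conj_swap)

lemma coeff_conj_coeff_singlets:
  assumes "v \<in> coeff_singlets G r"
  shows "coeff_conj v \<in> coeff_singlets G r"
proof -
  have "conj_swap w \<in> invariants G (z_rep r) (bi_swap_eigenspace e)"
    if "w \<in> invariants G (z_rep r) (bi_swap_eigenspace e)" "cnj e = e" for w e
    using that(1) by (rule invariants_stable) (simp_all add: that(2) conj_swap_bi_swap_eigenspace z_rep_conj_swap)
  moreover have "conj_swap m \<in> invariants G (mu_rep r) UNIV" if "m \<in> invariants G (mu_rep r) UNIV" for m
    using that by (rule invariants_stable) (simp_all add: mu_rep_conj_swap)
  ultimately show ?thesis
    using assms unfolding coeff_singlets_def by (simp add: dsum_map_in_dsum_space)
qed

lemma z_coeff_conditions_iff: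
  "swap_both_invariant w \<and> conj_swap w = w \<and> (\<forall>g\<in>carrier G. z_rep r g *v w = w) \<longleftrightarrow>
     sym_part w \<in> invariants G (z_rep r) (bi_swap_eigenspace 1) \<and>
     alt_part w \<in> invariants G (z_rep r) (bi_swap_eigenspace (-1)) \<and>
     conj_swap (sym_part w) = sym_part w \<and> conj_swap (alt_part w) = alt_part w"
proof (cases "swap_both_invariant w")
  case True
  then show ?thesis
    using swap_both_invariant_iff[of w] conj_swap_fixed_iff_sym_alt_parts[OF True]
      z_rep_fixes_iff_sym_alt_parts[of r _ w]
    by (auto simp: invariants_def)
next
  case False
  then show ?thesis
    using swap_both_invariant_iff[of w] by (auto simp: invariants_def)
qed

context unitary_rep
begin

lemma act_mu_invariant_iff:
  "(\<forall>g\<in>carrier G. act_mu (r g) \<mu> = \<mu>) \<longleftrightarrow> swap_index \<mu> \<in> invariants G (mu_rep r) UNIV"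
  using ball_carrier_cnj_transpose[of "\<lambda>U. act_mu U \<mu> = \<mu>"]
  by (simp add: invariants_def mu_rep_swap_index swap_index_eq_iff)

lemma act_z_invariant_iff:
  "(\<forall>g\<in>carrier G. act_z (r g) z = z) \<longleftrightarrow> (\<forall>g\<in>carrier G. z_rep r g *v regroup z = regroup z)"
  using ball_carrier_cnj_transpose[of "\<lambda>U. act_z U z = z"]
  by (simp add: z_rep_regroup regroup_eq_iff)

lemma mem_invariant_potentials_iff:
  "x \<in> invariant_potentials G r \<longleftrightarrow>
     coeff_vector x \<in> coeff_singlets G r \<and> coeff_conj (coeff_vector x) = coeff_vector x"
proof -
  obtain \<mu> z where x: "x = (\<mu>, z)" by fastforce
  define w where "w = regroup z"
  have "x \<in> invariant_potentials G r \<longleftrightarrow>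
      (conj_swap (swap_index \<mu>) = swap_index \<mu> \<and> swap_index \<mu> \<in> invariants G (mu_rep r) UNIV) \<and>
      (swap_both_invariant w \<and> conj_swap w = w \<and> (\<forall>g\<in>carrier G. z_rep r g *v w = w))"
    unfolding x w_def invariant_potentials_def
    by (simp add: herm_mu_iff herm_z_iff ball_conj_distrib act_mu_invariant_iff act_z_invariant_iff) blast
  also have "\<dots> \<longleftrightarrow> coeff_vector x \<in> coeff_singlets G r \<and> coeff_conj (coeff_vector x) = coeff_vector x"
    unfolding x w_def coeff_vector_def coeff_singlets_def
    by (simp add: dsum_map_def dsum_vec_eq_iff z_coeff_conditions_iff) blast
  finally show ?thesis .
qed

lemma image_coeff_vector:
  "coeff_vector ` invariant_potentials G r = {v \<in> coeff_singlets G r. coeff_conj v = v}"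
proof -
  have "coeff_singlets G r \<subseteq> range coeff_vector"
    unfolding coeff_singlets_def invariants_def
    by (auto intro: coeff_vector_surj simp: mem_dsum_space)
  then show ?thesis
    using mem_invariant_potentials_iff by blast
qed

end

theorem theorem5:
  fixes G :: "('g, 'b) monoid_scheme"
    and r :: "'g \<Rightarrow> complex^'n^'n"
  assumes "group G"
    and "\<And>g. g \<in> carrier G \<Longrightarrow> unitary_mat (r g)"
    and "\<And>g h. g \<in> carrier G \<Longrightarrow> h \<in> carrier G \<Longrightarrow> r (g \<otimes>\<^bsub>G\<^esub> h) = r g ** r h"
  shows "dim (invariant_potentials G r) =
    num_singlets G
      (dsum_rep (tensor_rep (conj_rep r) r)
        (dsum_rep (tensor_rep (tensor_rep r r) (tensor_rep (conj_rep r) (conj_rep r)))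
                  (tensor_rep (tensor_rep r r) (tensor_rep (conj_rep r) (conj_rep r)))))
      (dsum_space UNIV
        (dsum_space (tensor_space sym_space sym_space) (tensor_space alt_space alt_space)))"
proof -
  interpret unitary_rep G r
    by (rule unitary_rep.intro[OF assms])
  have "dim (invariant_potentials G r) = dim (coeff_vector ` invariant_potentials G r)"
    by (rule dim_image_eq[symmetric, OF linear_coeff_vector inj_on_subset[OF inj_coeff_vector subset_UNIV]])
  also have "\<dots> = vec.dim (coeff_singlets G r)"
    unfolding image_coeff_vector
    by (rule dim_fixed_points_antilinear_involution[OF subspace_coeff_singlets coeff_conj_coeff_singlets
          antilinear_involution_coeff_conj])
  also have "\<dots> = num_singlets G (dsum_rep (mu_rep r) (dsum_rep (z_rep r) (z_rep r)))
      (dsum_space UNIV (dsum_space (tensor_space sym_space sym_space) (tensor_space alt_space alt_space)))"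
    by (simp add: num_singlets_eq_dim_invariants invariants_dsum_rep coeff_singlets_def
        sym_space_eq alt_space_eq tensor_space_swap_eigenspace)
  finally show ?thesis .
qed

end
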